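(* Let $H_i:[0,T]\times\mathbb{R}^n\times\mathbb{R}^n\to\mathbb{R}$, $i\in\mathbb{N}\cup\{0\}$, be continuous in all variables and convex in the last variable, and let $\mathsf{e}_i:[0,T]\times\mathbb{R}^n\times\mathbb{R}^{n+1}\to\mathbb{R}^{n+1}$ be defined by $\mathsf{e}_i(t,x,a)=s_{n+1}(\Phi_i(t,x,a))$, where $\Phi_i(t,x,a)=E_i(t,x)\cap\bar B(a,2d(a,E_i(t,x)))$ and $E_i(t,x)=\mathrm{epi}\,H_i^*(t,x,\cdot)$. If $H_i\to H_0$ uniformly on compact subsets of $[0,T]\times\mathbb{R}^n\times\mathbb{R}^n$, then for every $(t_0,x_0,a_0)\in[0,T]\times\mathbb{R}^n\times\mathbb{R}^{n+1}$ and every sequence $(t_i,x_i,a_i)\to(t_0,x_0,a_0)$ we have $\mathsf{e}_i(t_i,x_i,a_i)\to\mathsf{e}_0(t_0,x_0,a_0)$.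
   Context: $H_i^*(t,x,v)=\sup_p\{\langle v,p\rangle-H_i(t,x,p)\}$; $\mathrm{epi}\,\varphi=\{(v,\eta)\in\mathbb{R}^n\times\mathbb{R}:\varphi(v)\le\eta\}$; $d(a,K)=\inf_{\xi\in K}|a-\xi|$; $\bar B(a,r)$ closed ball. Steiner point of a nonempty compact convex $K\subset\mathbb{R}^m$: $s_m(K)=m\int_{S^{m-1}}p\,\max_{y\in K}\langle p,y\rangle\,\mu(dp)$, where $\mu$ is the rotation-invariant probability measure on the unit sphere $S^{m-1}$. *)

theory Defs
  imports "HOL-Analysis.Analysis"
begin

definition conj_H :: "(real \<Rightarrow> 'x \<Rightarrow> 'a::real_inner \<Rightarrow> real) \<Rightarrow> real \<Rightarrow> 'x \<Rightarrow> 'a \<Rightarrow> ereal" where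
  "conj_H H t x v = (SUP p. ereal (v \<bullet> p - H t x p))"

definition epi :: "('a \<Rightarrow> ereal) \<Rightarrow> ('a \<times> real) set" where
  "epi f = {(v, \<eta>). f v \<le> ereal \<eta>}"

definition E_set :: "(real \<Rightarrow> 'x \<Rightarrow> 'a::real_inner \<Rightarrow> real) \<Rightarrow> real \<Rightarrow> 'x \<Rightarrow> ('a \<times> real) set" where
  "E_set H t x = epi (conj_H H t x)"

text \<open>Rotation-invariant probability measure on the unit sphere: the image of the
  normalized Lebesgue measure on the open unit ball under radial projection.\<close>
definition sphere_measure :: "'a::euclidean_space measure" where
  "sphere_measure = distr (uniform_measure lborel (ball 0 1)) borel (\<lambda>x. sgn x)"

definition steiner_point :: "'a::euclidean_space set \<Rightarrow> 'a" where
  "steiner_point K = real DIM('a) *\<^sub>R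
     (\<integral>p. (Sup ((\<lambda>y. p \<bullet> y) ` K)) *\<^sub>R p \<partial>sphere_measure)"

definition Phi_set :: "(real \<Rightarrow> 'x \<Rightarrow> 'a::euclidean_space \<Rightarrow> real) \<Rightarrow> real \<Rightarrow> 'x \<Rightarrow> 'a \<times> real \<Rightarrow> ('a \<times> real) set" where
  "Phi_set H t x a = E_set H t x \<inter> cball a (2 * infdist a (E_set H t x))"

definition e_sel :: "(real \<Rightarrow> 'x \<Rightarrow> 'a::euclidean_space \<Rightarrow> real) \<Rightarrow> real \<Rightarrow> 'x \<Rightarrow> 'a \<times> real \<Rightarrow> 'a \<times> real" where
  "e_sel H t x a = steiner_point (Phi_set H t x a)"

end

(*
  The sets E_i = epi H_i^*(t_i,x_i,.) converge to E_0 = epi H_0^*(t_0,x_0,.) in the sense of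
  Painleve-Kuratowski.  Cluster points of points of E_i lie in E_0 because the convex functions
  G_i = H_i(t_i,x_i,.) converge to G_0 = H_0(t_0,x_0,.) pointwise.  Conversely, if (v,eta) lies in
  E_0 then, once G_i is uniformly close to G_0 on a large ball, convexity gives G_i(p) >=
  v.p - delta |p| - eta - delta everywhere, and separating the epigraph of G_i from the hypograph of
  this concave function yields an affine minorant with slope alpha near v, i.e. a point
  (alpha, eta + delta) of E_i near (v,eta).

  For closed sets this convergence makes d(a_i,E_i) converge to d(a_0,E_0), and since E_0 is
  convex it passes to the sets Phi_i = E_i intersected with B(a_i, 2 d(a_i,E_i)): a point of
  Phi_0 can be pushed towards a nearest point of E_0 into the open ball, where it is approximated
  by points of Phi_i.  The Phi_i are compact and uniformly bounded, so their support functions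
  converge pointwise, and dominated convergence in the integral defining the Steiner point
  concludes.
*)
theory Submission
  imports Defs
begin

section \<open>Support functions and the Steiner point\<close>

definition support_function :: "'a::real_inner set \<Rightarrow> 'a \<Rightarrow> real" where
  "support_function K p = Sup ((\<lambda>y. p \<bullet> y) ` K)"

lemma support_function_upper:
  assumes "compact K" "y \<in> K"
  shows "p \<bullet> y \<le> support_function K p"
proof -
  have "bounded ((\<lambda>y. p \<bullet> y) ` K)"
    using assms by (intro compact_imp_bounded compact_continuous_image) (auto intro: continuous_intros)
  then show ?thesis
    unfolding support_function_def using assms by (auto intro: cSup_upper bounded_imp_bdd_above)
qed

lemma support_function_attained:
  assumes "compact K" "K \<noteq> {}"
  obtains y where "y \<in> K" "support_function K p = p \<bullet> y"
proof -
  have "continuous_on K (\<lambda>y. p \<bullet> y)" by (intro continuous_intros)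
  then obtain y where y: "y \<in> K" "\<And>z. z \<in> K \<Longrightarrow> p \<bullet> z \<le> p \<bullet> y"
    using continuous_attains_sup[OF assms] by blast
  then have "support_function K p = p \<bullet> y"
    unfolding support_function_def by (intro cSup_eq_maximum) auto
  with y that show ?thesis by blast
qed

lemma support_function_abs_le:
  assumes "compact K" "K \<noteq> {}" "K \<subseteq> cball 0 M"
  shows "\<bar>support_function K p\<bar> \<le> M * norm p"
proof -
  obtain y where y: "y \<in> K" "support_function K p = p \<bullet> y"
    using support_function_attained assms by metis
  have "\<bar>p \<bullet> y\<bar> \<le> norm p * norm y" by (rule Cauchy_Schwarz_ineq2)
  also have "\<dots> \<le> norm p * M" using y assms by (intro mult_left_mono) auto
  finally show ?thesis using y by (simp add: mult.commute)
qed

lemma support_function_lipschitz: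
  assumes "compact K" "K \<noteq> {}" "K \<subseteq> cball 0 M"
  shows "M-lipschitz_on UNIV (support_function K)"
proof (rule lipschitz_onI)
  have one_sided: "support_function K p - support_function K q \<le> M * norm (p - q)" for p q
  proof -
    obtain y where y: "y \<in> K" "support_function K p = p \<bullet> y"
      using support_function_attained assms by metis
    have "p \<bullet> y - q \<bullet> y \<le> norm (p - q) * norm y"
      using norm_cauchy_schwarz[of "p - q" y] by (simp add: inner_diff_left)
    also have "\<dots> \<le> norm (p - q) * M" using y assms by (intro mult_left_mono) auto
    finally show ?thesis
      using support_function_upper[OF assms(1) y(1), of q] y by (simp add: mult.commute)
  qed
  show "dist (support_function K p) (support_function K q) \<le> M * dist p q" for p q
    using one_sided[of p q] one_sided[of q p]
    by (simp add: dist_real_def dist_norm norm_minus_commute abs_le_iff)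
  obtain y where "y \<in> K" using assms by auto
  then have "norm y \<le> M" using assms(3) by auto
  then show "0 \<le> M" by (meson norm_ge_zero order_trans)
qed

lemma finite_sphere_measure: "finite_measure (sphere_measure :: 'a::euclidean_space measure)"
proof (rule finite_measureI)
  let ?B = "ball (0::'a) 1"
  have "emeasure lborel ?B = ennreal (Henstock_Kurzweil_Integration.content ?B)"
    using emeasure_lborel_ball_finite[of "0::'a" 1] by (simp add: emeasure_eq_ennreal_measure)
  then have pos: "emeasure lborel ?B \<noteq> 0"
    using content_ball_pos[of 1 "0::'a"] by simp
  have "emeasure (sphere_measure :: 'a measure) (space sphere_measure)
        = emeasure (uniform_measure lborel ?B) (sgn -` UNIV \<inter> space (uniform_measure lborel ?B))"
    unfolding sphere_measure_def by (subst emeasure_distr) auto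
  also have "\<dots> = emeasure lborel ?B / emeasure lborel ?B"
    by (subst emeasure_uniform_measure) auto
  also have "\<dots> = 1"
    using pos emeasure_lborel_ball_finite[of "0::'a" 1] by (intro ennreal_divide_self) auto
  finally show "emeasure (sphere_measure :: 'a measure) (space sphere_measure) \<noteq> \<infinity>" by simp
qed

lemma AE_sphere_measure_norm_le:
  "AE p in (sphere_measure :: 'a::euclidean_space measure). norm p \<le> 1"
proof -
  have "AE x in uniform_measure lborel (ball (0::'a) 1). norm (sgn x) \<le> 1"
    by (auto simp: norm_sgn)
  then show ?thesis unfolding sphere_measure_def
    by (subst AE_distr_iff) auto
qed

lemma support_function_tendsto_imp_steiner_point_tendsto:
  fixes K :: "nat \<Rightarrow> 'a::euclidean_space set"
  assumes K: "\<And>i. compact (K i)" "\<And>i. K i \<noteq> {}" "\<And>i. K i \<subseteq> cball 0 M"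
    and K0: "compact K0" "K0 \<noteq> {}" "K0 \<subseteq> cball 0 M"
    and lim: "\<And>p. (\<lambda>i. support_function (K i) p) \<longlonglongrightarrow> support_function K0 p"
  shows "(\<lambda>i. steiner_point (K i)) \<longlonglongrightarrow> steiner_point K0"
proof -
  have measurable: "(\<lambda>p. support_function L p *\<^sub>R p) \<in> borel_measurable sphere_measure"
    if "compact L" "L \<noteq> {}" "L \<subseteq> cball 0 M" for L :: "'a set"
  proof -
    have "continuous_on UNIV (\<lambda>p. support_function L p *\<^sub>R p)"
      using support_function_lipschitz[OF that] by (intro continuous_intros lipschitz_on_continuous_on)
    then have "(\<lambda>p. support_function L p *\<^sub>R p) \<in> borel_measurable borel"
      by (rule borel_measurable_continuous_onI)
    then show ?thesis
      by (subst measurable_cong_sets[of _ borel _ borel]) (simp_all add: sphere_measure_def)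
  qed
  have bounded: "AE p in sphere_measure. norm (support_function L p *\<^sub>R p) \<le> M"
    if "compact L" "L \<noteq> {}" "L \<subseteq> cball 0 M" for L :: "'a set"
    using AE_sphere_measure_norm_le
  proof eventually_elim
    case (elim p)
    have "M \<ge> 0" using support_function_lipschitz[OF that] by (rule lipschitz_on_nonneg)
    have "norm (support_function L p *\<^sub>R p) \<le> (M * norm p) * norm p"
      using support_function_abs_le[OF that] by (simp add: mult_right_mono)
    also have "\<dots> \<le> M" using mult_left_le[OF mult_le_one[OF elim norm_ge_zero elim] \<open>M \<ge> 0\<close>]
      by (simp add: mult.assoc)
    finally show ?case .
  qed
  have "(\<lambda>i. \<integral>p. support_function (K i) p *\<^sub>R p \<partial>sphere_measure)
          \<longlonglongrightarrow> (\<integral>p. support_function K0 p *\<^sub>R p \<partial>sphere_measure)"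
  proof (rule integral_dominated_convergence[where w = "\<lambda>_. M"])
    show "integrable sphere_measure (\<lambda>_. M)"
      using finite_sphere_measure by (rule finite_measure.integrable_const)
    show "AE p in sphere_measure. (\<lambda>i. support_function (K i) p *\<^sub>R p) \<longlonglongrightarrow> support_function K0 p *\<^sub>R p"
      by (intro AE_I2 tendsto_scaleR lim tendsto_const)
    show "(\<lambda>p. support_function K0 p *\<^sub>R p) \<in> borel_measurable sphere_measure"
      by (rule measurable[OF K0])
    show "(\<lambda>p. support_function (K i) p *\<^sub>R p) \<in> borel_measurable sphere_measure" for i
      by (rule measurable[OF K(1-3)])
    show "AE p in sphere_measure. norm (support_function (K i) p *\<^sub>R p) \<le> M" for i
      by (rule bounded[OF K(1-3)])
  qed
  then show ?thesis
    unfolding steiner_point_def support_function_def[symmetric]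
    by (rule tendsto_scaleR[OF tendsto_const])
qed

section \<open>Painleve-Kuratowski convergence and proximal caps\<close>

definition proximal_cap :: "'a::metric_space set \<Rightarrow> 'a \<Rightarrow> 'a set" where
  "proximal_cap E a = E \<inter> cball a (2 * infdist a E)"

lemma Phi_set_eq_proximal_cap: "Phi_set H t x a = proximal_cap (E_set H t x) a"
  unfolding Phi_set_def proximal_cap_def ..

lemma convex_approx_inside_ball:
  fixes S :: "'a::real_normed_vector set"
  assumes S: "convex S" "y \<in> S" "\<pi> \<in> S" and y: "dist a y \<le> r" and \<pi>: "dist a \<pi> < r" and e: "0 < e"
  obtains z where "z \<in> S" "dist z y < e" "dist a z < r"
proof -
  define t where "t = min 1 (e / (norm (\<pi> - y) + 1))"
  have t: "0 < t" "t \<le> 1" using e by (auto simp: t_def add_nonneg_pos)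
  define z where "z = (1 - t) *\<^sub>R y + t *\<^sub>R \<pi>"
  have "z \<in> S" unfolding z_def using S t by (intro convexD) auto
  have "dist z y = t * norm (\<pi> - y)"
    unfolding z_def dist_norm using t by (simp add: algebra_simps flip: scaleR_right_diff_distrib)
  also have "\<dots> \<le> e / (norm (\<pi> - y) + 1) * norm (\<pi> - y)"
    unfolding t_def by (intro mult_right_mono) auto
  also have "\<dots> < e"
    using e by (simp add: divide_less_eq add_nonneg_pos)
  finally have "dist z y < e" .
  have "a - z = (1 - t) *\<^sub>R (a - y) + t *\<^sub>R (a - \<pi>)"
    unfolding z_def by (simp add: algebra_simps)
  then have "dist a z \<le> (1 - t) * dist a y + t * dist a \<pi>"
    using norm_triangle_ineq[of "(1 - t) *\<^sub>R (a - y)" "t *\<^sub>R (a - \<pi>)"] t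
    by (simp add: dist_norm)
  also have "\<dots> < (1 - t) * r + t * r"
  proof -
    have "(1 - t) * dist a y \<le> (1 - t) * r" using y t by (intro mult_left_mono) auto
    moreover have "t * dist a \<pi> < t * r" using \<pi> t by (intro mult_strict_left_mono) auto
    ultimately show ?thesis by linarith
  qed
  finally have "dist a z < r" by (simp add: algebra_simps)
  with \<open>z \<in> S\<close> \<open>dist z y < e\<close> that show ?thesis by blast
qed

locale kuratowski_convergence =
  fixes E :: "nat \<Rightarrow> 'a::euclidean_space set" and E0 :: "'a set"
  assumes closed_E: "\<And>i. closed (E i)" and closed_E0: "closed E0"
    and E_nonempty: "\<And>i. E i \<noteq> {}" and E0_nonempty: "E0 \<noteq> {}"
    and limit_in_E0: "\<And>(r :: nat \<Rightarrow> nat) z l.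
      strict_mono r \<Longrightarrow> (\<And>j. z j \<in> E (r j)) \<Longrightarrow> z \<longlonglongrightarrow> l \<Longrightarrow> l \<in> E0"
    and approx_E0: "\<And>z e.
      z \<in> E0 \<Longrightarrow> 0 < e \<Longrightarrow> eventually (\<lambda>i. \<exists>w\<in>E i. dist w z < e) sequentially"
begin

lemma bounded_subseq_limit_in_E0:
  fixes r :: "nat \<Rightarrow> nat" and z :: "nat \<Rightarrow> 'a"
  assumes r: "strict_mono r" and z: "\<And>j. z j \<in> E (r j)" and bounded: "bounded (range z)"
  obtains s l where "strict_mono s" "(z \<circ> s) \<longlonglongrightarrow> l" "l \<in> E0"
proof -
  obtain l s where s: "strict_mono s" "(z \<circ> s) \<longlonglongrightarrow> l"
    using bounded_imp_convergent_subsequence[of z] bounded by blast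
  have "l \<in> E0"
    using limit_in_E0[of "r \<circ> s" "z \<circ> s"] r z s by (auto intro: strict_mono_o)
  with s that show ?thesis by blast
qed

lemma nearest_point_E:
  obtains n where "n \<in> E i" "dist a n = infdist a (E i)"
  using infdist_attains_inf[OF closed_E E_nonempty] by metis

lemma nearest_point_E0:
  obtains n where "n \<in> E0" "dist a n = infdist a E0"
  using infdist_attains_inf[OF closed_E0 E0_nonempty] by metis

lemma infdist_tendsto_fixed: "(\<lambda>i. infdist x (E i)) \<longlonglongrightarrow> infdist x E0"
proof (rule order_tendstoI)
  fix c assume c: "infdist x E0 < c"
  obtain \<pi> where \<pi>: "\<pi> \<in> E0" "dist x \<pi> = infdist x E0" using nearest_point_E0 by blast
  have "0 < c - infdist x E0" using c by simp
  from approx_E0[OF \<pi>(1) this] show "eventually (\<lambda>i. infdist x (E i) < c) sequentially"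
  proof eventually_elim
    case (elim i)
    then obtain w where w: "w \<in> E i" "dist w \<pi> < c - infdist x E0" by blast
    have "infdist x (E i) \<le> dist x w" by (rule infdist_le[OF w(1)])
    also have "\<dots> \<le> dist x \<pi> + dist w \<pi>" by (metis dist_commute dist_triangle)
    finally show ?case using w \<pi> by simp
  qed
next
  fix c assume c: "c < infdist x E0"
  show "eventually (\<lambda>i. c < infdist x (E i)) sequentially"
  proof (rule ccontr)
    assume "\<not> ?thesis"
    from not_eventually_sequentiallyD[OF this] obtain r :: "nat \<Rightarrow> nat"
      where r: "strict_mono r" "\<forall>j. \<not> c < infdist x (E (r j))"
      by blast
    have "\<forall>j. \<exists>n. n \<in> E (r j) \<and> dist x n = infdist x (E (r j))"
      using nearest_point_E by blast
    then obtain z where z: "\<And>j. z j \<in> E (r j)" "\<And>j. dist x (z j) = infdist x (E (r j))"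
      by metis
    have "range z \<subseteq> cball x c" using z r(2) by (auto simp: not_less)
    then have "bounded (range z)" using bounded_cball bounded_subset by blast
    then obtain s l where s: "strict_mono s" "(z \<circ> s) \<longlonglongrightarrow> l" "l \<in> E0"
      using bounded_subseq_limit_in_E0[OF r(1) z(1)] by blast
    have "(\<lambda>k. dist x (z (s k))) \<longlonglongrightarrow> dist x l"
      using s(2) by (intro tendsto_dist tendsto_const) (simp add: o_def)
    moreover have "eventually (\<lambda>k. dist x (z (s k)) \<le> c) sequentially"
      using z(2) r(2) by (intro always_eventually) (simp add: not_less)
    ultimately have "dist x l \<le> c" by (rule tendsto_upperbound) simp
    moreover have "infdist x E0 \<le> dist x l" by (rule infdist_le[OF s(3)])
    ultimately show False using c by simp
  qed
qed

lemma infdist_tendsto: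
  assumes "a \<longlonglongrightarrow> a0"
  shows "(\<lambda>i. infdist (a i) (E i)) \<longlonglongrightarrow> infdist a0 E0"
proof -
  have "(\<lambda>i. dist (a i) a0) \<longlonglongrightarrow> 0"
    using assms by (rule tendsto_dist_iff[THEN iffD1])
  moreover have "\<forall>i. norm (infdist (a i) (E i) - infdist a0 (E i)) \<le> dist (a i) a0"
    by (intro allI) (simp only: real_norm_def infdist_triangle_abs)
  ultimately have "(\<lambda>i. infdist (a i) (E i) - infdist a0 (E i)) \<longlonglongrightarrow> 0"
    by (rule Lim_null_comparison[OF always_eventually, rotated])
  from tendsto_add[OF this infdist_tendsto_fixed[of a0]] show ?thesis by simp
qed

lemma E0_subset_cball:
  assumes bound: "\<And>i. E i \<subseteq> cball 0 M"
  shows "E0 \<subseteq> cball 0 M"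
proof
  fix z assume z: "z \<in> E0"
  show "z \<in> cball 0 M"
  proof (rule ccontr)
    assume "z \<notin> cball 0 M"
    then have "0 < norm z - M" by simp
    from approx_E0[OF z this] obtain i w where w: "w \<in> E i" "dist w z < norm z - M"
      unfolding eventually_sequentially by blast
    have "norm z \<le> norm w + dist w z"
      using norm_triangle_sub[of z w] by (simp add: dist_norm norm_minus_commute)
    moreover have "norm w \<le> M" using w(1) bound[of i] by auto
    ultimately show False using w(2) by simp
  qed
qed

lemma compact_E:
  assumes "\<And>i. E i \<subseteq> cball 0 M"
  shows "compact (E i)"
  using assms closed_E by (meson bounded_cball bounded_subset compact_eq_bounded_closed)

lemma compact_E0:
  assumes "\<And>i. E i \<subseteq> cball 0 M"
  shows "compact E0"
  using E0_subset_cball[OF assms] closed_E0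
  by (meson bounded_cball bounded_subset compact_eq_bounded_closed)

lemma support_function_tendsto:
  assumes bound: "\<And>i. E i \<subseteq> cball 0 M"
  shows "(\<lambda>i. support_function (E i) p) \<longlonglongrightarrow> support_function E0 p"
proof (rule order_tendstoI)
  fix c assume c: "c < support_function E0 p"
  obtain y0 where y0: "y0 \<in> E0" "support_function E0 p = p \<bullet> y0"
    using support_function_attained[OF compact_E0[OF bound] E0_nonempty] by metis
  define e where "e = (support_function E0 p - c) / (norm p + 1)"
  have "0 < norm p + 1" by (simp add: add_nonneg_pos)
  then have "0 < e" using c by (simp add: e_def)
  from approx_E0[OF y0(1) this]
  show "eventually (\<lambda>i. c < support_function (E i) p) sequentially"
  proof eventually_elim
    case (elim i)
    then obtain w where w: "w \<in> E i" "dist w y0 < e" by blast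
    have "\<bar>p \<bullet> (y0 - w)\<bar> \<le> norm p * dist w y0"
      using Cauchy_Schwarz_ineq2[of p "y0 - w"] by (simp add: dist_norm norm_minus_commute)
    also have "\<dots> \<le> norm p * e" using w(2) by (intro mult_left_mono) auto
    also have "\<dots> < (norm p + 1) * e" using \<open>0 < e\<close> by simp
    also have "\<dots> = support_function E0 p - c"
      unfolding e_def using \<open>0 < norm p + 1\<close> by simp
    finally have "c < p \<bullet> w" using y0(2) by (simp add: inner_diff_right abs_less_iff)
    also have "\<dots> \<le> support_function (E i) p"
      by (rule support_function_upper[OF compact_E[OF bound] w(1)])
    finally show ?case .
  qed
next
  fix c assume c: "support_function E0 p < c"
  show "eventually (\<lambda>i. support_function (E i) p < c) sequentially"
  proof (rule ccontr)
    assume "\<not> ?thesis"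
    from not_eventually_sequentiallyD[OF this] obtain r :: "nat \<Rightarrow> nat"
      where r: "strict_mono r" "\<forall>j. \<not> support_function (E (r j)) p < c"
      by blast
    have "\<forall>j. \<exists>y. y \<in> E (r j) \<and> support_function (E (r j)) p = p \<bullet> y"
      using support_function_attained[OF compact_E[OF bound] E_nonempty] by blast
    then obtain y where y: "\<And>j. y j \<in> E (r j)" "\<And>j. support_function (E (r j)) p = p \<bullet> y j"
      by metis
    have "range y \<subseteq> cball 0 M" using y(1) bound by blast
    then have "bounded (range y)" using bounded_cball bounded_subset by blast
    then obtain s l where s: "strict_mono s" "(y \<circ> s) \<longlonglongrightarrow> l" "l \<in> E0"
      using bounded_subseq_limit_in_E0[OF r(1) y(1)] by blast
    have "(\<lambda>k. p \<bullet> y (s k)) \<longlonglongrightarrow> p \<bullet> l"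
      using s(2) by (intro tendsto_inner tendsto_const) (simp add: o_def)
    moreover have "eventually (\<lambda>k. c \<le> p \<bullet> y (s k)) sequentially"
      using y(2) r(2) by (intro always_eventually) (simp add: not_less)
    ultimately have "c \<le> p \<bullet> l" by (rule tendsto_lowerbound) simp
    moreover have "p \<bullet> l \<le> support_function E0 p"
      by (rule support_function_upper[OF compact_E0[OF bound] s(3)])
    ultimately show False using c by simp
  qed
qed

lemma steiner_point_tendsto:
  assumes "\<And>i. E i \<subseteq> cball 0 M"
  shows "(\<lambda>i. steiner_point (E i)) \<longlonglongrightarrow> steiner_point E0"
  using support_function_tendsto_imp_steiner_point_tendsto[OF compact_E[OF assms] E_nonempty assms
      compact_E0[OF assms] E0_nonempty E0_subset_cball[OF assms] support_function_tendsto[OF assms]] .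

context
  fixes a :: "nat \<Rightarrow> 'a" and a0 :: 'a
  assumes a_lim: "a \<longlonglongrightarrow> a0"
begin

lemma proximal_cap_limit:
  fixes r :: "nat \<Rightarrow> nat"
  assumes r: "strict_mono r" and z: "\<And>j. z j \<in> proximal_cap (E (r j)) (a (r j))" and lim: "z \<longlonglongrightarrow> l"
  shows "l \<in> proximal_cap E0 a0"
proof -
  have "l \<in> E0" using z lim by (intro limit_in_E0[OF r]) (auto simp: proximal_cap_def)
  have dist_lim: "(\<lambda>j. dist (a (r j)) (z j)) \<longlonglongrightarrow> dist a0 l"
    using LIMSEQ_subseq_LIMSEQ[OF a_lim r] lim by (intro tendsto_dist) (simp_all add: o_def)
  have radius_lim: "(\<lambda>j. 2 * infdist (a (r j)) (E (r j))) \<longlonglongrightarrow> 2 * infdist a0 E0"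
    using LIMSEQ_subseq_LIMSEQ[OF infdist_tendsto[OF a_lim] r]
    by (intro tendsto_mult_left) (simp add: o_def)
  have "eventually (\<lambda>j. dist (a (r j)) (z j) \<le> 2 * infdist (a (r j)) (E (r j))) sequentially"
    using z by (intro always_eventually) (simp add: proximal_cap_def)
  then have "dist a0 l \<le> 2 * infdist a0 E0"
    by (rule tendsto_le[OF trivial_limit_sequentially radius_lim dist_lim])
  with \<open>l \<in> E0\<close> show ?thesis by (simp add: proximal_cap_def)
qed

lemma proximal_cap_approx_inside:
  assumes ys: "ys \<in> E0" "dist a0 ys < 2 * infdist a0 E0" and e: "0 < e"
  shows "eventually (\<lambda>i. \<exists>w\<in>proximal_cap (E i) (a i). dist w ys < e) sequentially"
proof -
  define g where "g = 2 * infdist a0 E0 - dist a0 ys"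
  have g: "0 < g" using ys(2) by (simp add: g_def)
  have "eventually (\<lambda>i. \<exists>w\<in>E i. dist w ys < min e (g / 3)) sequentially"
    using e g by (intro approx_E0 ys(1)) simp
  moreover have "eventually (\<lambda>i. dist (a i) a0 < g / 3) sequentially"
    using g by (intro tendstoD[OF a_lim]) simp
  moreover have "eventually (\<lambda>i. infdist a0 E0 - g / 6 < infdist (a i) (E i)) sequentially"
    using g by (intro order_tendstoD(1)[OF infdist_tendsto[OF a_lim]]) simp
  ultimately show ?thesis
  proof eventually_elim
    case (elim i)
    then obtain w where w: "w \<in> E i" "dist w ys < min e (g / 3)" by blast
    have "dist (a i) w \<le> dist (a i) a0 + dist a0 ys + dist w ys"
      using dist_triangle[of "a i" w a0] dist_triangle[of a0 w ys] dist_commute[of ys w] by linarith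
    also have "\<dots> < 2 * infdist (a i) (E i)"
    proof -
      have "dist w ys < g / 3" using w(2) by simp
      with elim(2,3) g_def show ?thesis by linarith
    qed
    finally have "w \<in> proximal_cap (E i) (a i)" using w(1) by (simp add: proximal_cap_def)
    with w(2) show ?case by auto
  qed
qed

lemma proximal_cap_approx:
  assumes "convex E0" and y: "y \<in> proximal_cap E0 a0" and e: "0 < e"
  shows "eventually (\<lambda>i. \<exists>w\<in>proximal_cap (E i) (a i). dist w y < e) sequentially"
proof (cases "infdist a0 E0 = 0")
  case True
  then have "y = a0" using y by (simp add: proximal_cap_def)
  have "eventually (\<lambda>i. infdist (a i) (E i) < e / 2) sequentially"
    using e True by (intro order_tendstoD(2)[OF infdist_tendsto[OF a_lim]]) simp
  moreover have "eventually (\<lambda>i. dist (a i) a0 < e / 2) sequentially"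
    using e by (intro tendstoD[OF a_lim]) simp
  ultimately show ?thesis
  proof eventually_elim
    case (elim i)
    obtain n where n: "n \<in> E i" "dist (a i) n = infdist (a i) (E i)" by (rule nearest_point_E)
    then have "n \<in> proximal_cap (E i) (a i)" by (simp add: proximal_cap_def infdist_nonneg)
    moreover have "dist n a0 < e"
      using dist_triangle[of n a0 "a i"] elim n(2) by (simp add: dist_commute)
    ultimately show ?case using \<open>y = a0\<close> by blast
  qed
next
  case False
  \<comment> \<open>By convexity, y can be moved towards a nearest point of E0 into the open ball.\<close>
  then have "0 < infdist a0 E0" using infdist_nonneg[of a0 E0] by simp
  obtain \<pi> where \<pi>: "\<pi> \<in> E0" "dist a0 \<pi> = infdist a0 E0" by (rule nearest_point_E0)
  have \<pi>_inside: "dist a0 \<pi> < 2 * infdist a0 E0" using \<pi>(2) \<open>0 < infdist a0 E0\<close> by simp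
  have y_cap: "y \<in> E0" "dist a0 y \<le> 2 * infdist a0 E0" using y by (auto simp: proximal_cap_def)
  have "0 < e / 2" using e by simp
  obtain ys where ys: "ys \<in> E0" "dist ys y < e / 2" "dist a0 ys < 2 * infdist a0 E0"
    by (rule convex_approx_inside_ball[OF \<open>convex E0\<close> y_cap(1) \<pi>(1) y_cap(2) \<pi>_inside \<open>0 < e / 2\<close>])
  from proximal_cap_approx_inside[OF ys(1,3) \<open>0 < e / 2\<close>] show ?thesis
  proof eventually_elim
    case (elim i)
    then obtain w where w: "w \<in> proximal_cap (E i) (a i)" "dist w ys < e / 2" by blast
    have "dist w y < e" using dist_triangle[of w y ys] w(2) ys(2) by linarith
    with w(1) show ?case by blast
  qed
qed

lemma proximal_cap_bounded:
  obtains M where "\<And>i. proximal_cap (E i) (a i) \<subseteq> cball 0 M"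
proof -
  obtain Ma where Ma: "\<And>i. norm (a i) \<le> Ma"
    using convergent_imp_bounded[OF a_lim] unfolding bounded_iff by blast
  obtain Md where Md: "\<And>i. norm (infdist (a i) (E i)) \<le> Md"
    using convergent_imp_bounded[OF infdist_tendsto[OF a_lim]] unfolding bounded_iff by blast
  have "proximal_cap (E i) (a i) \<subseteq> cball 0 (Ma + 2 * Md)" for i
  proof
    fix y assume y: "y \<in> proximal_cap (E i) (a i)"
    have "norm y \<le> norm (a i) + dist (a i) y"
      using norm_triangle_sub[of y "a i"] by (simp add: dist_norm norm_minus_commute)
    also have "\<dots> \<le> Ma + 2 * Md"
      using y Ma[of i] Md[of i] by (auto simp: proximal_cap_def)
    finally show "y \<in> cball 0 (Ma + 2 * Md)" by simp
  qed
  then show ?thesis using that by blast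
qed

lemma kuratowski_convergence_proximal_cap:
  assumes "convex E0"
  shows "kuratowski_convergence (\<lambda>i. proximal_cap (E i) (a i)) (proximal_cap E0 a0)"
proof
  show "closed (proximal_cap (E i) (a i))" for i
    unfolding proximal_cap_def by (intro closed_Int closed_E closed_cball)
  show "closed (proximal_cap E0 a0)"
    unfolding proximal_cap_def by (intro closed_Int closed_E0 closed_cball)
  show "proximal_cap (E i) (a i) \<noteq> {}" for i
  proof -
    obtain n where "n \<in> E i" "dist (a i) n = infdist (a i) (E i)" by (rule nearest_point_E)
    then have "n \<in> proximal_cap (E i) (a i)" by (simp add: proximal_cap_def infdist_nonneg)
    then show ?thesis by blast
  qed
  show "proximal_cap E0 a0 \<noteq> {}"
  proof -
    obtain n where "n \<in> E0" "dist a0 n = infdist a0 E0" by (rule nearest_point_E0)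
    then have "n \<in> proximal_cap E0 a0" by (simp add: proximal_cap_def infdist_nonneg)
    then show ?thesis by blast
  qed
  show "l \<in> proximal_cap E0 a0"
    if "strict_mono r" "\<And>j. z j \<in> proximal_cap (E (r j)) (a (r j))" "z \<longlonglongrightarrow> l" for r z l
    by (rule proximal_cap_limit[OF that])
  show "eventually (\<lambda>i. \<exists>w\<in>proximal_cap (E i) (a i). dist w z < e) sequentially"
    if "z \<in> proximal_cap E0 a0" "0 < e" for z e
    by (rule proximal_cap_approx[OF assms that])
qed

end

end

section \<open>Epigraphs of convex conjugates\<close>

text \<open>A point (v, eta) lies above the conjugate of G iff p \<mapsto> v \<bullet> p - eta is an affine
  minorant of G.\<close>
definition conj_epigraph :: "('a::real_inner \<Rightarrow> real) \<Rightarrow> ('a \<times> real) set" where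
  "conj_epigraph G = {(v, \<eta>). \<forall>p. v \<bullet> p - G p \<le> \<eta>}"

lemma E_set_eq_conj_epigraph: "E_set H t x = conj_epigraph (H t x)"
  unfolding E_set_def epi_def conj_H_def conj_epigraph_def by (auto simp: SUP_le_iff)

lemma mem_conj_epigraph [simp]: "(v, \<eta>) \<in> conj_epigraph G \<longleftrightarrow> (\<forall>p. v \<bullet> p - G p \<le> \<eta>)"
  unfolding conj_epigraph_def by simp

lemma conj_epigraph_eq_Inter_halfspaces: "conj_epigraph G = (\<Inter>p. {z. (p, -1) \<bullet> z \<le> G p})"
  unfolding conj_epigraph_def by (force simp: inner_Pair algebra_simps inner_commute)

lemma closed_conj_epigraph: "closed (conj_epigraph G)"
  unfolding conj_epigraph_eq_Inter_halfspaces by (intro closed_INT ballI closed_halfspace_le)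

lemma convex_conj_epigraph: "convex (conj_epigraph G)"
  unfolding conj_epigraph_eq_Inter_halfspaces by (intro convex_INT ballI convex_halfspace_le)

lemma concave_on_inner_left: "concave_on UNIV (\<lambda>p. v \<bullet> p)"
  unfolding concave_on_iff by (simp add: inner_add_right)

lemma convex_on_norm_minorant:
  fixes f :: "'a::real_normed_vector \<Rightarrow> real"
  assumes f: "convex_on UNIV f" and R: "0 < R"
    and lower: "\<And>p. norm p \<le> R \<Longrightarrow> - A \<le> f p" and f0: "f 0 \<le> B"
  shows "- A - (A + B) / R * norm p \<le> f p"
proof (cases "norm p \<le> R")
  case True
  have "0 \<le> A + B" using lower[of 0] f0 R by simp
  then have "0 \<le> (A + B) / R * norm p" using R by simp
  then show ?thesis using lower[OF True] by linarith
next
  case False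
  define l where "l = R / norm p"
  have np: "0 < norm p" using False R by linarith
  have l: "0 < l" "l \<le> 1" using False R np by (auto simp: l_def field_simps)
  have "f (l *\<^sub>R p) \<le> (1 - l) * f 0 + l * f p"
    using convex_onD[OF f, of l 0 p] l by simp
  moreover have "norm (l *\<^sub>R p) = R" using np R by (simp add: l_def)
  then have "- A \<le> f (l *\<^sub>R p)" by (intro lower) simp
  ultimately have "- A \<le> (1 - l) * B + l * f p"
    using f0 l mult_left_mono[OF f0, of "1 - l"] by linarith
  then have "(- A - (1 - l) * B) / l \<le> f p" using l by (simp add: divide_le_eq algebra_simps)
  moreover have "(- A - (1 - l) * B) / l = B - (A + B) / R * norm p"
    using l np R by (simp add: l_def field_simps)
  moreover have "- A \<le> B" using lower[of 0] f0 R by simp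
  ultimately show ?thesis by simp
qed

lemma norm_le_if_inner_minus_norm_bounded:
  fixes w :: "'a::real_inner"
  assumes e: "0 \<le> e" and bounded: "\<And>p. w \<bullet> p - e * norm p \<le> C"
  shows "norm w \<le> e"
proof (rule ccontr)
  assume "\<not> norm w \<le> e"
  then have d: "0 < norm w" "0 < norm w - e" using e by auto
  define t where "t = (\<bar>C\<bar> + 1) / (norm w * (norm w - e))"
  have "0 < t" using d by (simp add: t_def)
  have "w \<bullet> (t *\<^sub>R w) - e * norm (t *\<^sub>R w) = t * (norm w * (norm w - e))"
    using \<open>0 < t\<close> by (simp add: power2_norm_eq_inner[symmetric] power2_eq_square algebra_simps)
  also have "\<dots> = \<bar>C\<bar> + 1" using d by (simp add: t_def)
  finally show False using bounded[of "t *\<^sub>R w"] by linarith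
qed

lemma convex_strict_hypograph:
  assumes "concave_on UNIV g"
  shows "convex {z. snd z < g (fst z)}"
proof (rule convexI)
  fix x y :: "'a \<times> real" and u v :: real
  assume "x \<in> {z. snd z < g (fst z)}" "y \<in> {z. snd z < g (fst z)}"
    and uv: "0 \<le> u" "0 \<le> v" "u + v = 1"
  then have x: "snd x < g (fst x)" and y: "snd y < g (fst y)" by auto
  have "u * snd x + v * snd y < u * g (fst x) + v * g (fst y)"
  proof (cases "u = 0")
    case True
    then show ?thesis using uv y by simp
  next
    case False
    then have "u * snd x < u * g (fst x)" using uv x by (intro mult_strict_left_mono) auto
    moreover have "v * snd y \<le> v * g (fst y)" using uv y by (intro mult_left_mono) auto
    ultimately show ?thesis by linarith
  qed
  also have "\<dots> \<le> g (u *\<^sub>R fst x + v *\<^sub>R fst y)"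
    using assms uv unfolding concave_on_iff by blast
  finally show "u *\<^sub>R x + v *\<^sub>R y \<in> {z. snd z < g (fst z)}" by simp
qed

lemma separating_nonvertical_hyperplane:
  fixes G g :: "'a::euclidean_space \<Rightarrow> real"
  assumes G: "convex_on UNIV G" and g: "concave_on UNIV g" and le: "\<And>p. g p \<le> G p"
  obtains \<beta> q b where "\<beta> < 0"
    "\<And>p \<zeta>. G p \<le> \<zeta> \<Longrightarrow> q \<bullet> p + \<beta> * \<zeta> \<le> b"
    "\<And>p \<zeta>. \<zeta> < g p \<Longrightarrow> b \<le> q \<bullet> p + \<beta> * \<zeta>"
proof -
  let ?T = "{z. snd z < g (fst z)}"
  have convex_S: "convex (epigraph UNIV G)" using G by (rule convex_epigraphI)
  have convex_T: "convex ?T" using g by (rule convex_strict_hypograph)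
  have nonempty_S: "epigraph UNIV G \<noteq> {}" by (auto simp: epigraph_def)
  have "(0, g 0 - 1) \<in> ?T" by simp
  then have nonempty_T: "?T \<noteq> {}" by blast
  have "z \<notin> epigraph UNIV G" if "snd z < g (fst z)" for z
    using le[of "fst z"] that by (auto simp: epigraph_def)
  then have disjoint: "epigraph UNIV G \<inter> ?T = {}" by blast
  obtain n b where n: "n \<noteq> 0" "\<forall>z\<in>epigraph UNIV G. n \<bullet> z \<le> b" "\<forall>z\<in>?T. b \<le> n \<bullet> z"
    using separating_hyperplane_sets[OF convex_S convex_T nonempty_S nonempty_T disjoint] by blast
  obtain q \<beta> where n_eq: "n = (q, \<beta>)" by (cases n)
  have upper: "q \<bullet> p + \<beta> * \<zeta> \<le> b" if "G p \<le> \<zeta>" for p \<zeta>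
    using n(2) that by (auto simp: n_eq epigraph_def inner_Pair)
  have lower: "b \<le> q \<bullet> p + \<beta> * \<zeta>" if "\<zeta> < g p" for p \<zeta>
    using n(3) that by (auto simp: n_eq inner_Pair)
  have "\<beta> \<le> 0"
  proof (rule ccontr)
    assume "\<not> \<beta> \<le> 0"
    define \<zeta> where "\<zeta> = max (G 0) ((\<bar>b\<bar> + 1) / \<beta>)"
    have "\<beta> * ((\<bar>b\<bar> + 1) / \<beta>) \<le> \<beta> * \<zeta>"
      using \<open>\<not> \<beta> \<le> 0\<close> by (intro mult_left_mono) (auto simp: \<zeta>_def)
    then have "b < \<beta> * \<zeta>" using \<open>\<not> \<beta> \<le> 0\<close> by simp
    with upper[of 0 \<zeta>] show False by (simp add: \<zeta>_def)
  qed
  moreover have "\<beta> \<noteq> 0"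
  proof
    assume "\<beta> = 0"
    then have "q \<bullet> p - 0 * norm p \<le> b" for p using upper[of p "G p"] by simp
    then have "q = 0" using norm_le_if_inner_minus_norm_bounded[of 0 q b] by simp
    with \<open>\<beta> = 0\<close> n(1) show False by (simp add: n_eq zero_prod_def)
  qed
  ultimately have "\<beta> < 0" by simp
  from that[OF this upper lower] show ?thesis .
qed

lemma affine_between_concave_convex:
  fixes G g :: "'a::euclidean_space \<Rightarrow> real"
  assumes G: "convex_on UNIV G" and g: "concave_on UNIV g" and le: "\<And>p. g p \<le> G p"
  obtains \<alpha> c where "\<And>p. g p \<le> \<alpha> \<bullet> p - c" "\<And>p. \<alpha> \<bullet> p - c \<le> G p"
proof -
  obtain \<beta> q b where \<beta>: "\<beta> < 0"
    and upper: "\<And>p \<zeta>. G p \<le> \<zeta> \<Longrightarrow> q \<bullet> p + \<beta> * \<zeta> \<le> b"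
    and lower: "\<And>p \<zeta>. \<zeta> < g p \<Longrightarrow> b \<le> q \<bullet> p + \<beta> * \<zeta>"
    using separating_nonvertical_hyperplane[OF G g le] by blast
  define \<alpha> where "\<alpha> = (1 / - \<beta>) *\<^sub>R q"
  define c where "c = b / - \<beta>"
  have scaled: "\<alpha> \<bullet> p - \<zeta> = (q \<bullet> p + \<beta> * \<zeta>) / - \<beta>" for p \<zeta>
    using \<beta> by (simp add: \<alpha>_def field_simps)
  have "\<alpha> \<bullet> p - c \<le> G p" for p
    using divide_right_mono[OF upper[of p "G p"], of "- \<beta>"] \<beta> scaled[of p "G p"]
    by (simp add: c_def)
  moreover have "g p \<le> \<alpha> \<bullet> p - c" for p
  proof (rule field_le_epsilon)
    fix s :: real assume "0 < s"
    then have "b / - \<beta> \<le> (q \<bullet> p + \<beta> * (g p - s)) / - \<beta>"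
      using \<beta> by (intro divide_right_mono lower) auto
    then show "g p \<le> \<alpha> \<bullet> p - c + s" using scaled[of p "g p - s"] by (simp add: c_def)
  qed
  ultimately show ?thesis using that by blast
qed

lemma affine_minorant_near_slope:
  fixes G :: "'a::euclidean_space \<Rightarrow> real"
  assumes G: "convex_on UNIV G" and e: "0 \<le> e" and minorant: "\<And>p. v \<bullet> p - e * norm p - c \<le> G p"
  obtains \<alpha> where "norm (\<alpha> - v) \<le> e" "(\<alpha>, c) \<in> conj_epigraph G"
proof -
  have "convex_on UNIV norm" using convex_on_dist[of UNIV 0] by simp
  then have "concave_on UNIV (\<lambda>p. v \<bullet> p - e * norm p)"
    by (rule concave_on_diff[OF concave_on_inner_left convex_on_cmul[OF e]])
  then have concave: "concave_on UNIV (\<lambda>p. v \<bullet> p - e * norm p - c)"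
    by (rule concave_on_diff) (simp add: convex_on_const)
  obtain \<alpha> c' where below: "\<And>p. v \<bullet> p - e * norm p - c \<le> \<alpha> \<bullet> p - c'"
    and above: "\<And>p. \<alpha> \<bullet> p - c' \<le> G p"
    using affine_between_concave_convex[OF G concave minorant] by blast
  have "c' \<le> c" using below[of 0] by simp
  have "(v - \<alpha>) \<bullet> p - e * norm p \<le> c - c'" for p
    using below[of p] by (simp add: inner_diff_left)
  then have "norm (v - \<alpha>) \<le> e" by (rule norm_le_if_inner_minus_norm_bounded[OF e])
  moreover have "\<alpha> \<bullet> p - G p \<le> c" for p using above[of p] \<open>c' \<le> c\<close> by linarith
  then have "(\<alpha>, c) \<in> conj_epigraph G" by simp
  ultimately show ?thesis using that by (simp add: norm_minus_commute)
qed

lemma conj_epigraph_nonempty: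
  fixes G :: "'a::euclidean_space \<Rightarrow> real"
  assumes G: "convex_on UNIV G"
  shows "conj_epigraph G \<noteq> {}"
proof -
  have cont: "continuous_on (cball 0 1) G"
    using convex_on_continuous[OF open_UNIV G] by (rule continuous_on_subset) simp
  have "cball (0::'a) 1 \<noteq> {}" by simp
  from continuous_attains_inf[OF compact_cball this cont]
  obtain m where m: "\<forall>p\<in>cball 0 1. G m \<le> G p" by blast
  define A where "A = - G m"
  have bound: "- A - (A + G 0) / 1 * norm p \<le> G p" for p
    by (rule convex_on_norm_minorant[OF G]) (simp_all add: A_def m)
  have minorant: "0 \<bullet> p - (A + G 0) * norm p - A \<le> G p" for p
    unfolding inner_zero_left using bound[of p] by linarith
  have "0 \<le> A + G 0" using m by (simp add: A_def)
  obtain \<alpha> where "(\<alpha>, A) \<in> conj_epigraph G"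
    by (rule affine_minorant_near_slope[OF G \<open>0 \<le> A + G 0\<close> minorant])
  then show ?thesis by blast
qed

lemma conj_epigraph_limit:
  assumes F: "\<And>p. (\<lambda>j. F j p) \<longlonglongrightarrow> F0 p" and z: "\<And>j. z j \<in> conj_epigraph (F j)"
    and lim: "z \<longlonglongrightarrow> (v, \<eta>)"
  shows "(v, \<eta>) \<in> conj_epigraph F0"
proof -
  have "v \<bullet> p - F0 p \<le> \<eta>" for p
  proof -
    have "(\<lambda>j. fst (z j)) \<longlonglongrightarrow> v" using tendsto_fst[OF lim] by simp
    then have lhs: "(\<lambda>j. fst (z j) \<bullet> p - F j p) \<longlonglongrightarrow> v \<bullet> p - F0 p"
      using F[of p] by (intro tendsto_diff tendsto_inner tendsto_const)
    have rhs: "(\<lambda>j. snd (z j)) \<longlonglongrightarrow> \<eta>" using tendsto_snd[OF lim] by simp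
    have "eventually (\<lambda>j. fst (z j) \<bullet> p - F j p \<le> snd (z j)) sequentially"
      using z by (intro always_eventually allI) (metis mem_conj_epigraph prod.collapse)
    from tendsto_le[OF trivial_limit_sequentially rhs lhs this] show ?thesis .
  qed
  then show ?thesis by simp
qed

lemma conj_epigraph_approx:
  fixes G :: "nat \<Rightarrow> 'a::euclidean_space \<Rightarrow> real"
  assumes convex: "\<And>i. convex_on UNIV (G i)"
    and unif: "\<And>R. uniform_limit (cball 0 R) G G0 sequentially"
    and z: "(v, \<eta>) \<in> conj_epigraph G0" and e: "0 < e"
  shows "eventually (\<lambda>i. \<exists>w\<in>conj_epigraph (G i). dist w (v, \<eta>) < e) sequentially"
proof -
  define \<delta> where "\<delta> = e / 3"
  define A where "A = \<eta> + \<delta>"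
  define B where "B = G0 0 + \<delta>"
  define R where "R = (A + B) / \<delta>"
  have "0 < \<delta>" using e by (simp add: \<delta>_def)
  have "0 - G0 0 \<le> \<eta>" using z by (metis mem_conj_epigraph inner_zero_right)
  then have "0 < A + B" using \<open>0 < \<delta>\<close> by (simp add: A_def B_def)
  then have R: "0 < R" "(A + B) / R = \<delta>" using \<open>0 < \<delta>\<close> by (simp_all add: R_def)
  from uniform_limitD[OF unif[of R] \<open>0 < \<delta>\<close>] show ?thesis
  proof eventually_elim
    case (elim i)
    \<comment> \<open>On the ball of radius R, G i - v is bounded below by -A; convexity spreads this bound.\<close>
    have convex_f: "convex_on UNIV (\<lambda>p. G i p - v \<bullet> p)"
      by (rule convex_on_diff[OF convex concave_on_inner_left])
    have "- A \<le> G i p - v \<bullet> p" if "norm p \<le> R" for p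
    proof -
      have "\<bar>G i p - G0 p\<bar> < \<delta>" using elim that by (simp add: dist_real_def)
      moreover have "v \<bullet> p - G0 p \<le> \<eta>" using z by simp
      ultimately show ?thesis by (simp add: A_def)
    qed
    moreover have "G i 0 - v \<bullet> 0 \<le> B"
      using bspec[OF elim, of 0] R(1) by (simp add: B_def dist_real_def)
    ultimately have "- A - (A + B) / R * norm p \<le> G i p - v \<bullet> p" for p
      by (rule convex_on_norm_minorant[OF convex_f R(1)])
    then have "v \<bullet> p - \<delta> * norm p - A \<le> G i p" for p using R(2) by (simp add: algebra_simps)
    then obtain \<alpha> where \<alpha>: "norm (\<alpha> - v) \<le> \<delta>" "(\<alpha>, A) \<in> conj_epigraph (G i)"
      using affine_minorant_near_slope[OF convex less_imp_le[OF \<open>0 < \<delta>\<close>]] by blast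
    have "dist (\<alpha>, A) (v, \<eta>) \<le> dist \<alpha> v + dist A \<eta>"
      unfolding dist_Pair_Pair by (rule order_trans[OF sqrt_sum_squares_le_sum_abs]) simp
    also have "\<dots> < e" using \<alpha>(1) \<open>0 < \<delta>\<close> by (simp add: dist_norm A_def \<delta>_def dist_real_def)
    finally show ?case using \<alpha>(2) by blast
  qed
qed

lemma kuratowski_convergence_conj_epigraph:
  fixes G :: "nat \<Rightarrow> 'a::euclidean_space \<Rightarrow> real"
  assumes convex: "\<And>i. convex_on UNIV (G i)" "convex_on UNIV G0"
    and unif: "\<And>R. uniform_limit (cball 0 R) G G0 sequentially"
  shows "kuratowski_convergence (\<lambda>i. conj_epigraph (G i)) (conj_epigraph G0)"
proof
  show "closed (conj_epigraph (G i))" "closed (conj_epigraph G0)" for i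
    by (rule closed_conj_epigraph)+
  show "conj_epigraph (G i) \<noteq> {}" "conj_epigraph G0 \<noteq> {}" for i
    by (rule conj_epigraph_nonempty, rule convex)+
  show "l \<in> conj_epigraph G0"
    if r: "strict_mono r" and z: "\<And>j. z j \<in> conj_epigraph (G (r j))" and lim: "z \<longlonglongrightarrow> l"
    for r :: "nat \<Rightarrow> nat" and z l
  proof -
    have pointwise: "(\<lambda>i. G i p) \<longlonglongrightarrow> G0 p" for p
      by (rule tendsto_uniform_limitI[OF unif[of "norm p"]]) simp
    have "(\<lambda>j. G (r j) p) \<longlonglongrightarrow> G0 p" for p
      using LIMSEQ_subseq_LIMSEQ[OF pointwise r] by (simp add: o_def)
    with z lim show ?thesis using conj_epigraph_limit[of "\<lambda>j. G (r j)" G0 z] by (cases l) auto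
  qed
  show "eventually (\<lambda>i. \<exists>w\<in>conj_epigraph (G i). dist w z < e) sequentially"
    if "z \<in> conj_epigraph G0" "0 < e" for z e
    using that conj_epigraph_approx[OF convex(1) unif] by (cases z) auto
qed

lemma uniform_limit_along_parameters:
  fixes F :: "nat \<Rightarrow> 'a::metric_space \<Rightarrow> 'b::metric_space \<Rightarrow> 'c::metric_space \<Rightarrow> 'd::metric_space"
  assumes unif: "uniform_limit (S \<times> X \<times> P)
      (\<lambda>i (t, x, p). F i t x p) (\<lambda>(t, x, p). Flim t x p) sequentially"
    and cont: "uniformly_continuous_on (S \<times> X \<times> P) (\<lambda>(t, x, p). Flim t x p)"
    and t: "t \<longlonglongrightarrow> t0" "\<And>i. t i \<in> S" "t0 \<in> S"
    and x: "x \<longlonglongrightarrow> x0" "\<And>i. x i \<in> X" "x0 \<in> X"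
  shows "uniform_limit P (\<lambda>i. F i (t i) (x i)) (Flim t0 x0) sequentially"
proof (rule uniform_limitI)
  fix e :: real assume "0 < e"
  then have "0 < e / 2" by simp
  obtain \<delta> where \<delta>: "0 < \<delta>" and close: "\<And>z z'. z \<in> S \<times> X \<times> P \<Longrightarrow> z' \<in> S \<times> X \<times> P \<Longrightarrow>
      dist z' z < \<delta> \<Longrightarrow> dist ((\<lambda>(t, x, p). Flim t x p) z') ((\<lambda>(t, x, p). Flim t x p) z) < e / 2"
    using uniformly_continuous_onE[OF cont \<open>0 < e / 2\<close>] by blast
  have "0 < \<delta> / 2" using \<delta> by simp
  have "eventually (\<lambda>i. \<forall>z\<in>S \<times> X \<times> P.
      dist ((\<lambda>(t, x, p). F i t x p) z) ((\<lambda>(t, x, p). Flim t x p) z) < e / 2) sequentially"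
    by (rule uniform_limitD[OF unif \<open>0 < e / 2\<close>])
  moreover have "eventually (\<lambda>i. dist (t i) t0 < \<delta> / 2) sequentially"
    by (rule tendstoD[OF t(1) \<open>0 < \<delta> / 2\<close>])
  moreover have "eventually (\<lambda>i. dist (x i) x0 < \<delta> / 2) sequentially"
    by (rule tendstoD[OF x(1) \<open>0 < \<delta> / 2\<close>])
  ultimately show "eventually (\<lambda>i. \<forall>p\<in>P. dist (F i (t i) (x i) p) (Flim t0 x0 p) < e) sequentially"
  proof eventually_elim
    case (elim i)
    show ?case
    proof
      fix p assume p: "p \<in> P"
      have "dist (t i, x i, p) (t0, x0, p) \<le> dist (t i) t0 + dist (x i) x0"
        unfolding dist_Pair_Pair by (rule order_trans[OF sqrt_sum_squares_le_sum_abs]) simp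
      then have "dist (Flim (t i) (x i) p) (Flim t0 x0 p) < e / 2"
        using close[of "(t0, x0, p)" "(t i, x i, p)"] elim t x p by simp
      moreover have "dist (F i (t i) (x i) p) (Flim (t i) (x i) p) < e / 2"
        using elim t x p by auto
      ultimately show "dist (F i (t i) (x i) p) (Flim t0 x0 p) < e"
        using dist_triangle[of "F i (t i) (x i) p" "Flim t0 x0 p" "Flim (t i) (x i) p"] by linarith
    qed
  qed
qed

lemma uniform_limit_along_convergent_parameters:
  fixes F :: "nat \<Rightarrow> 'a::heine_borel \<Rightarrow> 'b::heine_borel \<Rightarrow> 'c::metric_space \<Rightarrow> 'd::metric_space"
  assumes unif: "\<And>K. compact K \<Longrightarrow> K \<subseteq> S \<times> UNIV \<times> UNIV \<Longrightarrow>
      uniform_limit K (\<lambda>i (t, x, p). F i t x p) (\<lambda>(t, x, p). Flim t x p) sequentially"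
    and cont: "continuous_on (S \<times> UNIV \<times> UNIV) (\<lambda>(t, x, p). Flim t x p)"
    and t: "t \<longlonglongrightarrow> t0" "\<And>i. t i \<in> S" "t0 \<in> S"
    and x: "x \<longlonglongrightarrow> x0" and P: "compact P"
  shows "uniform_limit P (\<lambda>i. F i (t i) (x i)) (Flim t0 x0) sequentially"
proof -
  define K where "K = insert t0 (range t) \<times> insert x0 (range x) \<times> P"
  have "compact K"
    unfolding K_def using compact_sequence_with_limit[OF t(1)] compact_sequence_with_limit[OF x] P
    by (intro compact_Times)
  moreover have K_sub: "K \<subseteq> S \<times> UNIV \<times> UNIV" unfolding K_def using t(2,3) by auto
  ultimately have "uniformly_continuous_on K (\<lambda>(t, x, p). Flim t x p)"
    using continuous_on_subset[OF cont K_sub] by (intro compact_uniformly_continuous)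
  with unif[OF \<open>compact K\<close> K_sub] show ?thesis
    unfolding K_def by (rule uniform_limit_along_parameters) (use t x in auto)
qed

theorem theorem5p15:
  fixes T :: real
    and H :: "nat \<Rightarrow> real \<Rightarrow> real^'n \<Rightarrow> real^'n \<Rightarrow> real"
    and tt :: "nat \<Rightarrow> real" and xx :: "nat \<Rightarrow> real^'n" and aa :: "nat \<Rightarrow> (real^'n) \<times> real"
  assumes cont: "\<And>i. continuous_on ({0..T} \<times> UNIV \<times> UNIV) (\<lambda>(t, x, p). H i t x p)"
    and conv: "\<And>i t x. t \<in> {0..T} \<Longrightarrow> convex_on UNIV (H i t x)"
    and unif: "\<And>K. compact K \<Longrightarrow> K \<subseteq> {0..T} \<times> UNIV \<times> UNIV \<Longrightarrow>
                 uniform_limit K (\<lambda>i (t, x, p). H i t x p) (\<lambda>(t, x, p). H 0 t x p) sequentially"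
    and t_in: "\<And>i. tt i \<in> {0..T}"
    and t_lim: "(\<lambda>i. tt (Suc i)) \<longlonglongrightarrow> tt 0"
    and x_lim: "(\<lambda>i. xx (Suc i)) \<longlonglongrightarrow> xx 0"
    and a_lim: "(\<lambda>i. aa (Suc i)) \<longlonglongrightarrow> aa 0"
  shows "(\<lambda>i. e_sel (H (Suc i)) (tt (Suc i)) (xx (Suc i)) (aa (Suc i)))
           \<longlonglongrightarrow> e_sel (H 0) (tt 0) (xx 0) (aa 0)"
proof -
  define G where "G = (\<lambda>i. H (Suc i) (tt (Suc i)) (xx (Suc i)))"
  define G0 where "G0 = H 0 (tt 0) (xx 0)"
  have "uniform_limit K (\<lambda>i (t, x, p). H (Suc i) t x p) (\<lambda>(t, x, p). H 0 t x p) sequentially"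
    if "compact K" "K \<subseteq> {0..T} \<times> UNIV \<times> UNIV" for K
    using filterlim_sequentially_Suc[THEN iffD2, OF unif[OF that]] by simp
  then have "uniform_limit (cball 0 R) G G0 sequentially" for R
    unfolding G_def G0_def
    by (rule uniform_limit_along_convergent_parameters[OF _ cont t_lim t_in t_in x_lim compact_cball])
  then interpret epi: kuratowski_convergence "\<lambda>i. conj_epigraph (G i)" "conj_epigraph G0"
    using conv t_in by (intro kuratowski_convergence_conj_epigraph) (auto simp: G_def G0_def)
  interpret cap: kuratowski_convergence "\<lambda>i. proximal_cap (conj_epigraph (G i)) (aa (Suc i))"
      "proximal_cap (conj_epigraph G0) (aa 0)"
    by (rule epi.kuratowski_convergence_proximal_cap[OF a_lim convex_conj_epigraph])
  obtain M where "\<And>i. proximal_cap (conj_epigraph (G i)) (aa (Suc i)) \<subseteq> cball 0 M"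
    using epi.proximal_cap_bounded[OF a_lim] by blast
  from cap.steiner_point_tendsto[OF this] show ?thesis
    by (simp add: e_sel_def Phi_set_eq_proximal_cap E_set_eq_conj_epigraph G_def G0_def)
qed

end
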